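(* Let $f:\mathbb{R}^{2}\to\mathbb{R}$ be smooth and normal. Then for all $x,y\in\mathbb{R}$ and all $k_{1}\neq0$, $k_{2}\neq0$, the limits $F(k_{1},y)=\lim_{r\to\infty}\int_{-r}^{r}f(x,y)e^{-ik_{1}x}\,dx$ and $G(x,k_{2})=\lim_{r\to\infty}\int_{-r}^{r}f(x,y)e^{-ik_{2}y}\,dy$ both exist, and $y\mapsto F(k_{1},y)$ and $x\mapsto G(x,k_{2})$ are of moderate decrease (i.e. bounded by $\frac{D}{|y|^{2}}$, resp. $\frac{D}{|x|^{2}}$, for $|y|>1$, resp. $|x|>1$, for some constant $D>0$).
   Context: One-variable notions: a smooth $g:\mathbb{R}\setminus V\to\mathbb{R}$, $V\subset\mathbb{R}$ bounded closed, is analytic at infinity if there exist $\epsilon_{1},\epsilon_{2}>0$ such that $g(1/t)=\sum_{n\geq1}a_{n}t^{n}$ for $0<t<\epsilon_{1}$ and $g(1/t)=\sum_{n\geq1}b_{n}t^{n}$ for $-\epsilon_{2}<t<0$, with real coefficients and both power series absolutely convergent on the respective intervals. Two-variable notions: let $f:\mathbb{R}^{2}\setminus W\to\mathbb{R}$ be smooth with $W$ closed and bounded (here $W=\emptyset$). $f$ is of very moderate decrease if there is $C>0$ with $|f(x,y)|\leq\frac{C}{|(x,y)|}$ for $|(x,y)|>1$, and of moderate decrease if $|f(x,y)|\leq\frac{C}{|(x,y)|^{2}}$ for $|(x,y)|>1$. For fixed $x$ write $f_{x}(y)=f(x,y)$ and for fixed $y$ write $f_{y}(x)=f(x,y)$.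 $f$ is normal if: (i) for every $x$, $f_{x}$ is analytic at infinity; (ii) for every $y$, $f_{y}$ is analytic at infinity; (iii) $f$ is of very moderate decrease; (iv) $\frac{\partial f}{\partial x}$ and $\frac{\partial f}{\partial y}$ are of moderate decrease; (v) there is a uniform bound on the number of zeros of $f_{x},(f_{x})',(f_{x})''$ and of $f_{y},(f_{y})',(f_{y})''$. *)

theory Defs
  imports "HOL-Analysis.Analysis"
begin

text \<open>Smoothness (C-infinity) of a function of two real variables, expressed through
  iterated partial derivatives: D i j is the partial derivative of order i in the
  first and j in the second variable; all of them exist and are continuous.\<close>
definition smooth2 :: "(real \<Rightarrow> real \<Rightarrow> real) \<Rightarrow> bool" where
  "smooth2 f \<longleftrightarrow> (\<exists>D :: nat \<Rightarrow> nat \<Rightarrow> real \<Rightarrow> real \<Rightarrow> real.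
      D 0 0 = f \<and>
      (\<forall>i j. continuous_on UNIV (\<lambda>p. D i j (fst p) (snd p)) \<and>
        (\<forall>x y. ((\<lambda>t. D i j t y) has_real_derivative D (Suc i) j x y) (at x) \<and>
               ((\<lambda>t. D i j x t) has_real_derivative D i (Suc j) x y) (at y))))"

definition analytic_at_infinity :: "(real \<Rightarrow> real) \<Rightarrow> bool" where
  "analytic_at_infinity g \<longleftrightarrow> (\<exists>e1 e2 :: real. \<exists>a b :: nat \<Rightarrow> real. e1 > 0 \<and> e2 > 0 \<and>
      (\<forall>t. 0 < t \<and> t < e1 \<longrightarrow>
         summable (\<lambda>n. \<bar>a n * t ^ (n + 1)\<bar>) \<and> (\<lambda>n. a n * t ^ (n + 1)) sums g (1 / t)) \<and>
      (\<forall>t. - e2 < t \<and> t < 0 \<longrightarrow>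
         summable (\<lambda>n. \<bar>b n * t ^ (n + 1)\<bar>) \<and> (\<lambda>n. b n * t ^ (n + 1)) sums g (1 / t)))"

definition very_moderate_decrease :: "(real \<Rightarrow> real \<Rightarrow> real) \<Rightarrow> bool" where
  "very_moderate_decrease f \<longleftrightarrow> (\<exists>C>0. \<forall>x y. norm (x, y) > 1 \<longrightarrow> \<bar>f x y\<bar> \<le> C / norm (x, y))"

definition moderate_decrease :: "(real \<Rightarrow> real \<Rightarrow> real) \<Rightarrow> bool" where
  "moderate_decrease f \<longleftrightarrow> (\<exists>C>0. \<forall>x y. norm (x, y) > 1 \<longrightarrow> \<bar>f x y\<bar> \<le> C / norm (x, y) ^ 2)"

definition partial_x :: "(real \<Rightarrow> real \<Rightarrow> real) \<Rightarrow> real \<Rightarrow> real \<Rightarrow> real" where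
  "partial_x f x y = deriv (\<lambda>t. f t y) x"

definition partial_y :: "(real \<Rightarrow> real \<Rightarrow> real) \<Rightarrow> real \<Rightarrow> real \<Rightarrow> real" where
  "partial_y f x y = deriv (\<lambda>t. f x t) y"

definition zeros_bounded :: "nat \<Rightarrow> (real \<Rightarrow> real) \<Rightarrow> bool" where
  "zeros_bounded N g \<longleftrightarrow>
     finite {t. g t = 0} \<and> card {t. g t = 0} \<le> N \<and>
     finite {t. deriv g t = 0} \<and> card {t. deriv g t = 0} \<le> N \<and>
     finite {t. deriv (deriv g) t = 0} \<and> card {t. deriv (deriv g) t = 0} \<le> N"

definition normal :: "(real \<Rightarrow> real \<Rightarrow> real) \<Rightarrow> bool" where
  "normal f \<longleftrightarrow>
     (\<forall>x. analytic_at_infinity (\<lambda>y. f x y)) \<and>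
     (\<forall>y. analytic_at_infinity (\<lambda>x. f x y)) \<and>
     very_moderate_decrease f \<and>
     moderate_decrease (partial_x f) \<and> moderate_decrease (partial_y f) \<and>
     (\<exists>N. (\<forall>x. zeros_bounded N (\<lambda>y. f x y)) \<and> (\<forall>y. zeros_bounded N (\<lambda>x. f x y)))"

end

theory Submission
  imports Defs "HOL-Real_Asymp.Real_Asymp"
begin

(*
  Integrating by parts twice, the truncated Fourier integral of x \<mapsto> f x y is
  -1/k\<^sup>2 times that of the second x-derivative, up to boundary terms that vanish by the
  decay of f and of its x-derivative. Since the second x-derivative has at most N zeros,
  the first one is monotone on each of at most N + 1 pieces, so on any interval the
  integral of the absolute second derivative is at most 2 (N + 1) times the supremum of
  the absolute first derivative. On tails this gives convergence; on the whole line, where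
  the first derivative is bounded by C / y\<^sup>2, it gives moderate decrease in y. The other
  variable follows by swapping the arguments.
*)

definition fourier_kernel :: "real \<Rightarrow> real \<Rightarrow> complex" where
  "fourier_kernel k x = exp (- \<i> * complex_of_real (k * x))"

definition fourier_integral :: "(real \<Rightarrow> real) \<Rightarrow> real \<Rightarrow> real \<Rightarrow> real \<Rightarrow> complex" where
  "fourier_integral g k a b = integral {a..b} (\<lambda>x. of_real (g x) * fourier_kernel k x)"

lemma fourier_kernel_has_vector_derivative:
  "(fourier_kernel k has_vector_derivative (- \<i> * of_real k * fourier_kernel k x)) (at x within S)"
proof -
  have "((\<lambda>z. exp (- \<i> * (of_real k * z))) has_field_derivative
          exp (- \<i> * (of_real k * of_real x)) * (- \<i> * of_real k)) (at (of_real x))"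
    by (auto intro!: derivative_eq_intros)
  from has_vector_derivative_real_field[OF this, where s=S]
  show ?thesis unfolding fourier_kernel_def by (simp add: mult_ac)
qed

lemma continuous_on_fourier_kernel: "continuous_on S (fourier_kernel k)"
  unfolding fourier_kernel_def by (intro continuous_intros)

lemma norm_fourier_kernel [simp]: "norm (fourier_kernel k x) = 1"
  unfolding fourier_kernel_def by (simp add: norm_exp_i_times[of "- (k * x)", simplified])

lemma integrable_fourier_integrand:
  assumes "continuous_on UNIV g"
  shows "(\<lambda>x. of_real (g x) * fourier_kernel k x) integrable_on {a..b}"
  by (intro integrable_continuous_interval continuous_intros continuous_on_fourier_kernel
        continuous_on_subset[OF assms]) auto

lemma fourier_integral_combine:
  assumes "continuous_on UNIV g" and "a \<le> b" and "b \<le> c"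
  shows "fourier_integral g k a c = fourier_integral g k a b + fourier_integral g k b c"
  unfolding fourier_integral_def
  using Henstock_Kurzweil_Integration.integral_combine[OF assms(2,3) integrable_fourier_integrand[OF assms(1)]] by simp

lemma fourier_integral_by_parts:
  fixes g g' :: "real \<Rightarrow> real"
  assumes k: "k \<noteq> 0" and g: "\<And>x. (g has_real_derivative g' x) (at x)"
    and cont: "continuous_on UNIV g'" and ab: "a \<le> b"
  shows "fourier_integral g k a b = \<i> / of_real k *
    (of_real (g b) * fourier_kernel k b - of_real (g a) * fourier_kernel k a - fourier_integral g' k a b)"
proof -
  define c where "c = \<i> / of_real k"
  define P where "P x = c * (of_real (g x) * fourier_kernel k x)" for x
  have "(P has_vector_derivative
      c * (of_real (g x) * (- \<i> * of_real k * fourier_kernel k x) + of_real (g' x) * fourier_kernel k x))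
      (at x within {a..b})" for x
    unfolding P_def
    by (intro has_vector_derivative_mult_right has_vector_derivative_mult
        fourier_kernel_has_vector_derivative has_vector_derivative_of_real)
       (use g has_field_derivative_at_within in blast)
  also have "c * (of_real (g x) * (- \<i> * of_real k * fourier_kernel k x) + of_real (g' x) * fourier_kernel k x)
     = of_real (g x) * fourier_kernel k x + c * (of_real (g' x) * fourier_kernel k x)" for x
    using k by (simp add: c_def field_simps)
  finally have "((\<lambda>x. of_real (g x) * fourier_kernel k x + c * (of_real (g' x) * fourier_kernel k x))
      has_integral (P b - P a)) {a..b}"
    by (rule fundamental_theorem_of_calculus[OF ab])
  then have "P b - P a = integral {a..b}
      (\<lambda>x. of_real (g x) * fourier_kernel k x + c * (of_real (g' x) * fourier_kernel k x))"
    by (rule integral_unique[symmetric])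
  also have "\<dots> = fourier_integral g k a b + c * fourier_integral g' k a b"
    using g unfolding fourier_integral_def
    by (intro trans[OF integral_add] arg_cong2[where f="(+)"] integral_mult_right
        integrable_on_mult_right integrable_fourier_integrand cont refl)
       (meson DERIV_continuous continuous_at_imp_continuous_on)
  finally show ?thesis unfolding P_def c_def by (simp add: algebra_simps)
qed

lemma continuous_sign_const_if_no_interior_zero:
  fixes g :: "real \<Rightarrow> real"
  assumes cont: "continuous_on {a..b} g" and nz: "\<And>z. a < z \<Longrightarrow> z < b \<Longrightarrow> g z \<noteq> 0"
  shows "(\<forall>x\<in>{a..b}. 0 \<le> g x) \<or> (\<forall>x\<in>{a..b}. g x \<le> 0)"
proof (rule ccontr)
  assume "\<not> ?thesis"
  then obtain p q where p: "p \<in> {a..b}" "g p < 0" and q: "q \<in> {a..b}" "g q > 0"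
    by force
  have "continuous_on {min p q..max p q} g"
    using p q by (intro continuous_on_subset[OF cont]) auto
  then obtain z where "min p q \<le> z" "z \<le> max p q" "g z = 0"
    using IVT'[of g p 0 q] IVT2'[of g p 0 q] p q by (cases "p \<le> q") (auto simp: min_def max_def)
  moreover have "z \<noteq> p" "z \<noteq> q" using p q \<open>g z = 0\<close> by auto
  ultimately show False using nz[of z] p q by (auto simp: min_def max_def split: if_splits)
qed

lemma integral_abs_deriv_le_if_no_interior_zero:
  fixes g g' :: "real \<Rightarrow> real"
  assumes g: "\<And>x. (g has_real_derivative g' x) (at x)" and cont: "continuous_on UNIV g'"
    and nz: "\<And>z. a < z \<Longrightarrow> z < b \<Longrightarrow> g' z \<noteq> 0" and ab: "a \<le> b"
    and bound: "\<And>x. x \<in> {a..b} \<Longrightarrow> \<bar>g x\<bar> \<le> B"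
  shows "integral {a..b} (\<lambda>x. \<bar>g' x\<bar>) \<le> 2 * B"
proof -
  have ftc: "(g' has_integral (g b - g a)) {a..b}"
    using g by (intro fundamental_theorem_of_calculus[OF ab])
      (simp add: has_real_derivative_iff_has_vector_derivative[symmetric] has_field_derivative_at_within)
  have "(\<forall>x\<in>{a..b}. 0 \<le> g' x) \<or> (\<forall>x\<in>{a..b}. g' x \<le> 0)"
    by (rule continuous_sign_const_if_no_interior_zero) (use cont nz continuous_on_subset in blast)+
  then have "integral {a..b} (\<lambda>x. \<bar>g' x\<bar>) = \<bar>g b - g a\<bar>"
  proof (elim disjE)
    assume pos: "\<forall>x\<in>{a..b}. 0 \<le> g' x"
    then have "((\<lambda>x. \<bar>g' x\<bar>) has_integral (g b - g a)) {a..b}"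
      by (intro has_integral_eq[OF _ ftc]) simp
    with pos show ?thesis
      by (metis abs_of_nonneg has_integral_nonneg integral_unique abs_ge_zero)
  next
    assume neg: "\<forall>x\<in>{a..b}. g' x \<le> 0"
    then have "((\<lambda>x. \<bar>g' x\<bar>) has_integral - (g b - g a)) {a..b}"
      by (intro has_integral_eq[OF _ has_integral_neg[OF ftc]]) simp
    with neg show ?thesis
      by (metis abs_ge_zero abs_minus_cancel abs_of_nonneg has_integral_nonneg integral_unique)
  qed
  also have "\<dots> \<le> 2 * B" using bound[of a] bound[of b] ab by auto
  finally show ?thesis .
qed

lemma integral_abs_deriv_le_card_zeros:
  fixes g g' :: "real \<Rightarrow> real"
  assumes g: "\<And>x. (g has_real_derivative g' x) (at x)" and cont: "continuous_on UNIV g'"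
    and fin: "finite {x. g' x = 0}"
  shows "a \<le> b \<Longrightarrow> (\<And>x. x \<in> {a..b} \<Longrightarrow> \<bar>g x\<bar> \<le> B) \<Longrightarrow>
    integral {a..b} (\<lambda>x. \<bar>g' x\<bar>) \<le> 2 * B * (card ({x. g' x = 0} \<inter> {a<..<b}) + 1)"
proof (induction "card ({x. g' x = 0} \<inter> {a<..<b})" arbitrary: a b rule: less_induct)
  case less
  define Z where "Z = {x. g' x = 0}"
  have "0 \<le> B" using less.prems(2)[of a] less.prems(1) by auto
  show ?case
  proof (cases "Z \<inter> {a<..<b} = {}")
    case True
    then have "integral {a..b} (\<lambda>x. \<bar>g' x\<bar>) \<le> 2 * B"
      by (intro integral_abs_deriv_le_if_no_interior_zero[OF g cont _ less.prems]) (auto simp: Z_def)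
    then show ?thesis using True by (simp add: Z_def[symmetric])
  next
    case False
    then obtain z where z: "z \<in> Z" "a < z" "z < b" by auto
    let ?A = "Z \<inter> {a<..<z}" and ?C = "Z \<inter> {z<..<b}"
    have "card ?A + card ?C + 1 = card (?A \<union> ?C \<union> {z})"
      using fin by (subst card_Un_disjoint; auto simp: Z_def)+
    also have "\<dots> \<le> card (Z \<inter> {a<..<b})"
      using fin z by (intro card_mono) (auto simp: Z_def)
    finally have card_split: "card ?A + card ?C + 1 \<le> card (Z \<inter> {a<..<b})" .
    have "integral {a..b} (\<lambda>x. \<bar>g' x\<bar>) = integral {a..z} (\<lambda>x. \<bar>g' x\<bar>) + integral {z..b} (\<lambda>x. \<bar>g' x\<bar>)"
      using z by (intro Henstock_Kurzweil_Integration.integral_combine[symmetric]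
          integrable_continuous_interval continuous_intros continuous_on_subset[OF cont]) auto
    also have "\<dots> \<le> 2 * B * (card ?A + 1) + 2 * B * (card ?C + 1)"
      using less.hyps[of a z] less.hyps[of z b] card_split less.prems z
      by (intro add_mono) (auto simp: Z_def)
    also have "\<dots> = 2 * B * (card ?A + card ?C + 1 + 1)"
      by (simp add: algebra_simps)
    also have "\<dots> \<le> 2 * B * (card (Z \<inter> {a<..<b}) + 1)"
      using card_split \<open>0 \<le> B\<close> by (intro mult_left_mono) auto
    finally show ?thesis by (simp add: Z_def)
  qed
qed

lemma norm_integral_fourier_le_card_zeros:
  fixes g g' :: "real \<Rightarrow> real"
  assumes g: "\<And>x. (g has_real_derivative g' x) (at x)" and cont: "continuous_on UNIV g'"
    and fin: "finite {x. g' x = 0}" and card: "card {x. g' x = 0} \<le> N"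
    and ab: "a \<le> b" and bound: "\<And>x. x \<in> {a..b} \<Longrightarrow> \<bar>g x\<bar> \<le> B"
  shows "norm (fourier_integral g' k a b) \<le> 2 * B * (N + 1)"
proof -
  have "norm (fourier_integral g' k a b) \<le> integral {a..b} (\<lambda>x. \<bar>g' x\<bar>)"
    unfolding fourier_integral_def
    by (intro integral_norm_bound_integral integrable_fourier_integrand cont integrable_continuous_interval
        continuous_intros continuous_on_subset[OF cont]) (auto simp: norm_mult)
  also have "\<dots> \<le> 2 * B * (card ({x. g' x = 0} \<inter> {a<..<b}) + 1)"
    by (rule integral_abs_deriv_le_card_zeros[OF g cont fin ab bound])
  also have "\<dots> \<le> 2 * B * (N + 1)"
    using card card_mono[OF fin, of "{x. g' x = 0} \<inter> {a<..<b}"] bound[of a] ab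
    by (intro mult_left_mono) auto
  finally show ?thesis .
qed

lemma Cauchy_rate_imp_convergent_at_top:
  fixes h :: "real \<Rightarrow> 'a::banach"
  assumes rate: "(\<rho> \<longlongrightarrow> 0) at_top"
    and Cauchy: "\<And>r s. Q \<le> r \<Longrightarrow> r \<le> s \<Longrightarrow> norm (h s - h r) \<le> \<rho> r"
  shows "\<exists>L. (h \<longlongrightarrow> L) at_top"
proof -
  have "cauchy_filter (filtermap h at_top)"
    unfolding cauchy_filter_metric_filtermap
  proof (intro allI impI)
    fix e :: real assume "0 < e"
    then obtain R where R: "\<And>r. R \<le> r \<Longrightarrow> \<rho> r < e"
      using order_tendstoD(2)[OF rate] by (auto simp: eventually_at_top_linorder)
    have "dist (h r) (h s) < e" if "max Q R \<le> r" "max Q R \<le> s" for r s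
    proof (cases "r \<le> s")
      case True
      then show ?thesis using Cauchy[of r s] R[of r] that by (simp add: dist_norm norm_minus_commute)
    next
      case False
      then show ?thesis using Cauchy[of s r] R[of s] that by (simp add: dist_norm)
    qed
    then show "\<exists>P. eventually P at_top \<and> (\<forall>r s. P r \<and> P s \<longrightarrow> dist (h r) (h s) < e)"
      using eventually_ge_at_top[of "max Q R"] by blast
  qed
  then show ?thesis
    using cauchy_filter_convergent by (auto simp: convergent_filter_iff filterlim_def)
qed

lemma fourier_integral_symmetric_convergent:
  fixes g g' :: "real \<Rightarrow> real"
  assumes g: "\<And>x. (g has_real_derivative g' x) (at x)" and cont: "continuous_on UNIV g'"
    and fin: "finite {x. g' x = 0}" and card: "card {x. g' x = 0} \<le> N"
    and decay: "\<And>x. 1 < \<bar>x\<bar> \<Longrightarrow> \<bar>g x\<bar> \<le> C / x\<^sup>2"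
  shows "\<exists>L. ((\<lambda>r. fourier_integral g' k (-r) r) \<longlongrightarrow> L) at_top"
proof (rule Cauchy_rate_imp_convergent_at_top[where Q=2])
  show "((\<lambda>r. 4 * C * (N + 1) / r\<^sup>2) \<longlongrightarrow> 0) at_top" by real_asymp
next
  fix r s :: real assume rs: "2 \<le> r" "r \<le> s"
  have "0 \<le> C" using order_trans[OF abs_ge_zero decay[of 2]] by simp
  have tail: "\<bar>g x\<bar> \<le> C / r\<^sup>2" if "r \<le> \<bar>x\<bar>" for x
  proof -
    have "r\<^sup>2 \<le> x\<^sup>2" using power_mono[OF that, of 2] rs by simp
    then have "C / x\<^sup>2 \<le> C / r\<^sup>2" using \<open>0 \<le> C\<close> rs that by (intro divide_left_mono) auto
    then show ?thesis using decay[of x] that rs by simp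
  qed
  have "fourier_integral g' k (-s) s - fourier_integral g' k (-r) r
      = fourier_integral g' k (-s) (-r) + fourier_integral g' k r s"
    using fourier_integral_combine[OF cont, of "-s" "-r" s] fourier_integral_combine[OF cont, of "-r" r s] rs
    by simp
  also have "norm \<dots> \<le> 2 * (C / r\<^sup>2) * (N + 1) + 2 * (C / r\<^sup>2) * (N + 1)"
    using rs tail
    by (intro norm_triangle_le add_mono norm_integral_fourier_le_card_zeros[OF g cont fin card]) auto
  finally show "norm (fourier_integral g' k (-s) s - fourier_integral g' k (-r) r) \<le> 4 * C * (N + 1) / r\<^sup>2"
    by simp
qed

lemma tendsto_zero_at_infinity_if_decay:
  fixes g :: "real \<Rightarrow> real"
  assumes decay: "\<And>x. 1 < \<bar>x\<bar> \<Longrightarrow> \<bar>g x\<bar> \<le> C / \<bar>x\<bar> ^ n" and "0 < n"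
  shows "(g \<longlongrightarrow> 0) at_infinity"
proof (rule Lim_null_comparison)
  show "\<forall>\<^sub>F x in at_infinity. norm (g x) \<le> C / \<bar>x\<bar> ^ n"
    using decay by (auto simp: eventually_at_infinity intro!: exI[of _ 2])
  have "filterlim abs at_infinity (at_infinity :: real filter)"
    by (rule filterlim_norm_at_top_imp_at_infinity)
      (use filterlim_norm_at_top[where 'a=real] in \<open>simp add: real_norm_def[abs_def]\<close>)
  then show "((\<lambda>x. C / \<bar>x\<bar> ^ n) \<longlongrightarrow> 0) at_infinity"
    by (intro tendsto_divide_0[OF tendsto_const] Limits.filterlim_power_at_infinity \<open>0 < n\<close>)
qed

lemma fourier_boundary_tendsto_zero:
  fixes g :: "real \<Rightarrow> real"
  assumes "(g \<longlongrightarrow> 0) at_infinity"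
  shows "((\<lambda>r. of_real (g r) * fourier_kernel k r - of_real (g (-r)) * fourier_kernel k (-r))
    \<longlongrightarrow> 0) at_top"
proof -
  have lim: "((\<lambda>r. of_real (g r) * fourier_kernel k r) \<longlongrightarrow> 0) at_infinity"
    using assms by (subst tendsto_norm_zero_iff[symmetric]) (simp add: norm_mult tendsto_rabs_zero)
  have "filterlim uminus at_infinity (at_top :: real filter)"
    by (rule filterlim_norm_at_top_imp_at_infinity) (simp add: filterlim_abs_real)
  from tendsto_diff[OF filterlim_mono[OF lim order_refl at_top_le_at_infinity]
      filterlim_compose[OF lim this]]
  show ?thesis by simp
qed

lemma fourier_integral_tendsto_bounded:
  fixes g g' g'' :: "real \<Rightarrow> real"
  assumes k: "k \<noteq> 0"
    and g: "\<And>x. (g has_real_derivative g' x) (at x)"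
    and g': "\<And>x. (g' has_real_derivative g'' x) (at x)"
    and cont: "continuous_on UNIV g''"
    and fin: "finite {x. g'' x = 0}" and card: "card {x. g'' x = 0} \<le> N"
    and g_lim: "(g \<longlongrightarrow> 0) at_infinity"
    and decay: "\<And>x. 1 < \<bar>x\<bar> \<Longrightarrow> \<bar>g' x\<bar> \<le> C / x\<^sup>2"
  obtains L where "((\<lambda>r. fourier_integral g k (-r) r) \<longlongrightarrow> L) at_top"
    and "\<And>B. (\<And>x. \<bar>g' x\<bar> \<le> B) \<Longrightarrow> norm L \<le> 2 * B * (N + 1) / k\<^sup>2"
proof -
  define c where "c = \<i> / of_real k"
  define boundary where "boundary h r =
    of_real (h r) * fourier_kernel k r - of_real (h (-r)) * fourier_kernel k (-r)" for h :: "real \<Rightarrow> real" and r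
  have "continuous_on UNIV g'"
    using g' by (meson DERIV_continuous continuous_at_imp_continuous_on)
  then have by_parts: "fourier_integral g k (-r) r =
      c * boundary g r - c\<^sup>2 * boundary g' r + c\<^sup>2 * fourier_integral g'' k (-r) r" if "0 \<le> r" for r
    using fourier_integral_by_parts[OF k g, of "-r" r] fourier_integral_by_parts[OF k g' cont, of "-r" r] that
    unfolding boundary_def c_def by (simp add: algebra_simps power2_eq_square)
  obtain L where L: "((\<lambda>r. fourier_integral g'' k (-r) r) \<longlongrightarrow> L) at_top"
    using fourier_integral_symmetric_convergent[OF g' cont fin card decay] by blast
  have "(boundary g \<longlongrightarrow> 0) at_top"
    unfolding boundary_def by (rule fourier_boundary_tendsto_zero[OF g_lim])
  moreover have "(g' \<longlongrightarrow> 0) at_infinity"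
    using decay by (intro tendsto_zero_at_infinity_if_decay[where n=2]) (simp_all add: power2_abs)
  then have "(boundary g' \<longlongrightarrow> 0) at_top"
    unfolding boundary_def by (rule fourier_boundary_tendsto_zero)
  ultimately have "((\<lambda>r. c * boundary g r - c\<^sup>2 * boundary g' r + c\<^sup>2 * fourier_integral g'' k (-r) r)
      \<longlongrightarrow> c\<^sup>2 * L) at_top"
    using L by (auto intro!: tendsto_eq_intros)
  then have lim: "((\<lambda>r. fourier_integral g k (-r) r) \<longlongrightarrow> c\<^sup>2 * L) at_top"
    by (rule Lim_transform_eventually) (use eventually_ge_at_top[of 0] in \<open>rule eventually_mono, simp add: by_parts\<close>)
  show ?thesis
  proof (rule that[OF lim])
    fix B assume B: "\<And>x. \<bar>g' x\<bar> \<le> B"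
    have "norm L \<le> 2 * B * (N + 1)"
    proof (rule tendsto_upperbound[OF tendsto_norm[OF L]])
      show "\<forall>\<^sub>F r in at_top. norm (fourier_integral g'' k (-r) r) \<le> 2 * B * (N + 1)"
        using eventually_ge_at_top[of 0]
        by (rule eventually_mono) (rule norm_integral_fourier_le_card_zeros[OF g' cont fin card], auto intro: B)
    qed simp
    moreover have "norm (c\<^sup>2 * L) = norm L / k\<^sup>2"
      by (simp add: c_def norm_mult norm_divide norm_power power_divide)
    ultimately show "norm (c\<^sup>2 * L) \<le> 2 * B * (N + 1) / k\<^sup>2"
      by (simp add: divide_right_mono)
  qed
qed

lemma smooth2_partials_fst:
  assumes "smooth2 f"
  obtains f1 f2 where "\<And>x y. ((\<lambda>t. f t y) has_real_derivative f1 x y) (at x)"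
    and "\<And>x y. ((\<lambda>t. f1 t y) has_real_derivative f2 x y) (at x)"
    and "\<And>y. continuous_on UNIV (\<lambda>x. f2 x y)"
proof -
  obtain D where D0: "D 0 0 = f" and D: "\<forall>i j. continuous_on UNIV (\<lambda>p. D i j (fst p) (snd p)) \<and>
      (\<forall>x y. ((\<lambda>t. D i j t y) has_real_derivative D (Suc i) j x y) (at x) \<and>
             ((\<lambda>t. D i j x t) has_real_derivative D i (Suc j) x y) (at y))"
    using assms unfolding smooth2_def by blast
  have deriv: "((\<lambda>t. D i 0 t y) has_real_derivative D (Suc i) 0 x y) (at x)" for i x y
    using D by blast
  show ?thesis
  proof (rule that)
    show "((\<lambda>t. f t y) has_real_derivative D 1 0 x y) (at x)" for x y
      using deriv[of 0] by (simp add: D0)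
    show "((\<lambda>t. D 1 0 t y) has_real_derivative D 2 0 x y) (at x)" for x y
      using deriv[of 1] by (simp add: numeral_2_eq_2)
    show "continuous_on UNIV (\<lambda>x. D 2 0 x y)" for y
      using continuous_on_compose2[OF D[rule_format, THEN conjunct1, of 2 0], of UNIV "\<lambda>x. (x, y)"]
      by (simp add: continuous_intros)
  qed
qed

lemma smooth2_swap:
  assumes "smooth2 f"
  shows "smooth2 (\<lambda>x y. f y x)"
proof -
  obtain D where "D 0 0 = f" and D: "\<forall>i j. continuous_on UNIV (\<lambda>p. D i j (fst p) (snd p)) \<and>
      (\<forall>x y. ((\<lambda>t. D i j t y) has_real_derivative D (Suc i) j x y) (at x) \<and>
             ((\<lambda>t. D i j x t) has_real_derivative D i (Suc j) x y) (at y))"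
    using assms unfolding smooth2_def by blast
  moreover have "continuous_on UNIV (\<lambda>p. D j i (snd p) (fst p))" for i j
    using continuous_on_compose2[OF D[rule_format, THEN conjunct1, of j i], of UNIV "\<lambda>p. (snd p, fst p)"]
    by (simp add: continuous_intros)
  ultimately show ?thesis
    unfolding smooth2_def by (intro exI[of _ "\<lambda>i j x y. D j i y x"]) auto
qed

lemma norm_Pair_swap: "norm (x, y) = norm (y, x)"
  by (simp add: norm_Pair add.commute)

lemma very_moderate_decrease_swap:
  "very_moderate_decrease f \<Longrightarrow> very_moderate_decrease (\<lambda>x y. f y x)"
  unfolding very_moderate_decrease_def by (metis norm_Pair_swap)

lemma moderate_decrease_swap:
  "moderate_decrease f \<Longrightarrow> moderate_decrease (\<lambda>x y. f y x)"
  unfolding moderate_decrease_def by (metis norm_Pair_swap)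

lemma partial_x_swap: "partial_x (\<lambda>x y. f y x) = (\<lambda>x y. partial_y f y x)"
  unfolding partial_x_def partial_y_def by simp

lemma abs_le_div_power_if_le_norm:
  fixes f :: "real \<Rightarrow> real \<Rightarrow> real"
  assumes decay: "\<And>x y. 1 < norm (x, y) \<Longrightarrow> \<bar>f x y\<bar> \<le> C / norm (x, y) ^ n"
    and "0 \<le> C" and "1 < t" and "t \<le> norm (x, y)"
  shows "\<bar>f x y\<bar> \<le> C / t ^ n"
proof -
  have "\<bar>f x y\<bar> \<le> C / norm (x, y) ^ n" using assms by (intro decay) linarith
  also have "\<dots> \<le> C / t ^ n"
    using assms by (intro divide_left_mono power_mono mult_pos_pos zero_less_power) auto
  finally show ?thesis .
qed

lemma very_moderate_decrease_tendsto_zero_fst: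
  assumes "very_moderate_decrease f"
  shows "((\<lambda>x. f x y) \<longlongrightarrow> 0) at_infinity"
proof -
  obtain C where "0 < C" and C: "\<And>x y. 1 < norm (x, y) \<Longrightarrow> \<bar>f x y\<bar> \<le> C / norm (x, y) ^ 1"
    using assms unfolding very_moderate_decrease_def by auto
  have "\<bar>f x y\<bar> \<le> C / \<bar>x\<bar> ^ 1" if "1 < \<bar>x\<bar>" for x
    using abs_le_div_power_if_le_norm[OF C, where x=x and y=y and t="\<bar>x\<bar>"] \<open>0 < C\<close> that
      norm_fst_le[of x y] by simp
  then show ?thesis by (intro tendsto_zero_at_infinity_if_decay[where n=1]) auto
qed

lemma moderate_decrease_bounds:
  assumes "moderate_decrease f"
  obtains C where "0 < C" and "\<And>x y. 1 < \<bar>x\<bar> \<Longrightarrow> \<bar>f x y\<bar> \<le> C / x\<^sup>2"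
    and "\<And>x y. 1 < \<bar>y\<bar> \<Longrightarrow> \<bar>f x y\<bar> \<le> C / y\<^sup>2"
proof -
  obtain C where "0 < C" and C: "\<And>x y. 1 < norm (x, y) \<Longrightarrow> \<bar>f x y\<bar> \<le> C / norm (x, y) ^ 2"
    using assms unfolding moderate_decrease_def by blast
  show ?thesis
  proof (rule that[OF \<open>0 < C\<close>])
    fix x y :: real
    show "\<bar>f x y\<bar> \<le> C / x\<^sup>2" if "1 < \<bar>x\<bar>"
      using abs_le_div_power_if_le_norm[OF C, where x=x and y=y and t="\<bar>x\<bar>"] \<open>0 < C\<close> that
        norm_fst_le[of x y] by simp
    show "\<bar>f x y\<bar> \<le> C / y\<^sup>2" if "1 < \<bar>y\<bar>"
      using abs_le_div_power_if_le_norm[OF C, where x=x and y=y and t="\<bar>y\<bar>"] \<open>0 < C\<close> that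
        norm_snd_le[of y x] by simp
  qed
qed

lemma fourier_limit_fst_moderate_decrease:
  fixes f :: "real \<Rightarrow> real \<Rightarrow> real"
  assumes smooth: "smooth2 f" and vm: "very_moderate_decrease f"
    and md: "moderate_decrease (partial_x f)" and zeros: "\<And>y. zeros_bounded N (\<lambda>x. f x y)"
    and k: "k \<noteq> 0"
  shows "\<exists>F. (\<forall>y. ((\<lambda>r. fourier_integral (\<lambda>x. f x y) k (-r) r) \<longlongrightarrow> F y) at_top) \<and>
    (\<exists>D>0. \<forall>y. \<bar>y\<bar> > 1 \<longrightarrow> norm (F y) \<le> D / \<bar>y\<bar> ^ 2)"
proof -
  obtain f1 f2 where f1: "\<And>x y. ((\<lambda>t. f t y) has_real_derivative f1 x y) (at x)"
    and f2: "\<And>x y. ((\<lambda>t. f1 t y) has_real_derivative f2 x y) (at x)"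
    and cont: "\<And>y. continuous_on UNIV (\<lambda>x. f2 x y)"
    using smooth2_partials_fst[OF smooth] by metis
  have "partial_x f = f1"
    unfolding partial_x_def using f1 by (auto intro!: ext DERIV_imp_deriv)
  then obtain C where "0 < C" and decay_x: "\<And>x y. 1 < \<bar>x\<bar> \<Longrightarrow> \<bar>f1 x y\<bar> \<le> C / x\<^sup>2"
    and decay_y: "\<And>x y. 1 < \<bar>y\<bar> \<Longrightarrow> \<bar>f1 x y\<bar> \<le> C / y\<^sup>2"
    using moderate_decrease_bounds[OF md] by metis
  define D where "D = 2 * C * (N + 1) / k\<^sup>2"
  have "\<exists>L. ((\<lambda>r. fourier_integral (\<lambda>x. f x y) k (-r) r) \<longlongrightarrow> L) at_top \<and>
      (\<bar>y\<bar> > 1 \<longrightarrow> norm L \<le> D / \<bar>y\<bar> ^ 2)" for y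
  proof -
    have "deriv (\<lambda>x. f x y) = (\<lambda>x. f1 x y)" "deriv (\<lambda>x. f1 x y) = (\<lambda>x. f2 x y)"
      using f1 f2 by (auto intro!: ext DERIV_imp_deriv)
    then have "finite {x. f2 x y = 0}" "card {x. f2 x y = 0} \<le> N"
      using zeros[of y] unfolding zeros_bounded_def by auto
    then obtain L where lim: "((\<lambda>r. fourier_integral (\<lambda>x. f x y) k (-r) r) \<longlongrightarrow> L) at_top"
      and bound: "\<And>B. (\<And>x. \<bar>f1 x y\<bar> \<le> B) \<Longrightarrow> norm L \<le> 2 * B * (N + 1) / k\<^sup>2"
      using fourier_integral_tendsto_bounded[OF k f1 f2 cont _ _
            very_moderate_decrease_tendsto_zero_fst[OF vm] decay_x] by blast
    have "norm L \<le> D / \<bar>y\<bar> ^ 2" if "\<bar>y\<bar> > 1"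
      using bound[OF decay_y[OF that]] by (simp add: D_def power2_abs mult.commute)
    with lim show ?thesis by blast
  qed
  then obtain F where "\<And>y. ((\<lambda>r. fourier_integral (\<lambda>x. f x y) k (-r) r) \<longlongrightarrow> F y) at_top \<and>
      (\<bar>y\<bar> > 1 \<longrightarrow> norm (F y) \<le> D / \<bar>y\<bar> ^ 2)"
    by metis
  moreover have "D > 0" using \<open>0 < C\<close> k by (simp add: D_def)
  ultimately show ?thesis by blast
qed

theorem lemma10:
  fixes f :: "real \<Rightarrow> real \<Rightarrow> real"
  assumes "smooth2 f" and "normal f"
  shows "(\<forall>k1::real. k1 \<noteq> 0 \<longrightarrow>
           (\<exists>F :: real \<Rightarrow> complex.
              (\<forall>y. ((\<lambda>r. integral {-r..r}
                        (\<lambda>x. complex_of_real (f x y) * exp (- \<i> * complex_of_real (k1 * x))))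
                     \<longlongrightarrow> F y) at_top) \<and>
              (\<exists>D>0. \<forall>y. \<bar>y\<bar> > 1 \<longrightarrow> norm (F y) \<le> D / \<bar>y\<bar> ^ 2))) \<and>
         (\<forall>k2::real. k2 \<noteq> 0 \<longrightarrow>
           (\<exists>G :: real \<Rightarrow> complex.
              (\<forall>x. ((\<lambda>r. integral {-r..r}
                        (\<lambda>y. complex_of_real (f x y) * exp (- \<i> * complex_of_real (k2 * y))))
                     \<longlongrightarrow> G x) at_top) \<and>
              (\<exists>D>0. \<forall>x. \<bar>x\<bar> > 1 \<longrightarrow> norm (G x) \<le> D / \<bar>x\<bar> ^ 2)))"
proof -
  obtain N where zeros_x: "\<And>x. zeros_bounded N (\<lambda>y. f x y)"
    and zeros_y: "\<And>y. zeros_bounded N (\<lambda>x. f x y)"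
    using assms(2) unfolding normal_def by blast
  have vm: "very_moderate_decrease f" and mx: "moderate_decrease (partial_x f)"
    and my: "moderate_decrease (partial_y f)"
    using assms(2) unfolding normal_def by blast+
  have "moderate_decrease (partial_x (\<lambda>x y. f y x))"
    unfolding partial_x_swap by (rule moderate_decrease_swap[OF my])
  from fourier_limit_fst_moderate_decrease[OF assms(1) vm mx zeros_y]
    fourier_limit_fst_moderate_decrease[OF smooth2_swap[OF assms(1)] very_moderate_decrease_swap[OF vm]
      this zeros_x]
  show ?thesis unfolding fourier_integral_def fourier_kernel_def by blast
qed

end
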